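(* Let $E,F\subset\mathbb{R}^N$ be measurable sets with $\gamma(E),\gamma(F)\in(0,1)$ such that $$\frac{\gamma(F\triangle E)}{\gamma(F)}\leq\kappa\,\mathcal{A}_\gamma(F)$$ for some $0<\kappa<1/2$. Then $$\mathcal{A}_\gamma(E)\geq\frac{1-2\kappa}{c_\kappa}\mathcal{A}_\gamma(F),\qquad c_\kappa:=\begin{cases}1 & \text{if }\gamma(E\setminus F)=0,\\ 1+2\kappa & \text{if }\gamma(E\setminus F)>0.\end{cases}$$
   Context: $\gamma$ is the standard Gaussian measure on $\mathbb{R}^N$; $\Phi(r)=\gamma_1((-\infty,r))$; for $\omega\in\mathbb{S}^{N-1}$, $r\in\mathbb{R}$, $H_{\omega,r}=\{x:x\cdot\omega<r\}$. For measurable $G$ with $\gamma(G)\in(0,1)$ the Gaussian Fraenkel asymmetry is $\mathcal{A}_\gamma(G):=\min_{\omega\in\mathbb{S}^{N-1}}\gamma(G\triangle H_{\omega,r})/\gamma(G)$ with $r=\Phi^{-1}(\gamma(G))$. *)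

theory Defs
  imports "HOL-Analysis.Analysis"
begin

definition gauss :: "'a::euclidean_space measure" where
  "gauss = density lebesgue
     (\<lambda>x. ennreal ((2 * pi) powr (- real DIM('a) / 2) * exp (- (norm x)\<^sup>2 / 2)))"

definition Phi :: "real \<Rightarrow> real" where
  "Phi r = measure (gauss :: real measure) {..<r}"

definition Phi_inv :: "real \<Rightarrow> real" where
  "Phi_inv p = (THE r. Phi r = p)"

definition halfsp :: "'a::euclidean_space \<Rightarrow> real \<Rightarrow> 'a set" where
  "halfsp \<omega> r = {x. x \<bullet> \<omega> < r}"

definition symdiff :: "'a set \<Rightarrow> 'a set \<Rightarrow> 'a set" where
  "symdiff A B = (A - B) \<union> (B - A)"

text \<open>Gaussian Fraenkel asymmetry (the minimum over the unit sphere is attained,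
  so it coincides with the infimum).\<close>
definition gasym :: "'a::euclidean_space set \<Rightarrow> real" where
  "gasym G = (INF \<omega>\<in>sphere 0 1.
      measure gauss (symdiff G (halfsp \<omega> (Phi_inv (measure gauss G)))) / measure gauss G)"

end

theory Submission
  imports Defs "HOL-Probability.Probability"
begin

text \<open>
  Fix a unit vector \<open>\<omega>\<close> and let \<open>H\<^sub>E\<close>, \<open>H\<^sub>F\<close> be the half-spaces with normal \<open>\<omega>\<close>
  whose Gaussian measures are \<open>\<gamma>(E)\<close> and \<open>\<gamma>(F)\<close>. They are parallel, so
  \<open>\<gamma>(H\<^sub>E \<triangle> H\<^sub>F) = |\<gamma>(E) - \<gamma>(F)| \<le> \<gamma>(F \<triangle> E)\<close>, and the triangle inequality
  for \<open>\<gamma>(\<cdot> \<triangle> \<cdot>)\<close> gives \<open>\<gamma>(F \<triangle> H\<^sub>F) \<le> \<gamma>(E \<triangle> H\<^sub>E) + 2 \<gamma>(F \<triangle> E)\<close>.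
  Minimising over \<open>\<omega>\<close> yields \<open>\<gamma>(F) \<A>(F) \<le> \<gamma>(E) \<A>(E) + 2 \<gamma>(F \<triangle> E)\<close>, and the
  hypothesis \<open>\<gamma>(F \<triangle> E) \<le> \<kappa> \<gamma>(F) \<A>(F)\<close> turns this into
  \<open>(1 - 2\<kappa>) \<gamma>(F) \<A>(F) \<le> \<gamma>(E) \<A>(E)\<close>. Finally \<open>\<gamma>(E) \<le> \<gamma>(F) + \<gamma>(E - F)\<close>, where
  \<open>\<gamma>(E - F) \<le> \<kappa> \<gamma>(F) \<A>(F) \<le> 2\<kappa> \<gamma>(F)\<close> because \<open>\<A> \<le> 2\<close>; so \<open>\<gamma>(E) \<le> c\<^sub>\<kappa> \<gamma>(F)\<close>.

  That the half-space \<open>{x. x \<bullet> \<omega> < r}\<close> has measure \<open>\<Phi>(r)\<close> holds because the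
  coordinates are independent standard normals, so \<open>x \<bullet> \<omega>\<close> is a centred normal
  of variance \<open>|\<omega>|\<^sup>2 = 1\<close>; and \<open>\<Phi>\<close> is continuous and strictly increasing from 0 to 1,
  so \<open>Phi_inv\<close> inverts it on \<open>(0, 1)\<close>.
\<close>

lemma symdiff_commute: "symdiff A B = symdiff B A"
  by (auto simp: symdiff_def)

lemma (in finite_measure) measure_symdiff_triangle:
  assumes "A \<in> sets M" "B \<in> sets M" "C \<in> sets M"
  shows "measure M (symdiff A C) \<le> measure M (symdiff A B) + measure M (symdiff B C)"
proof -
  have "measure M (symdiff A C) \<le> measure M (symdiff A B \<union> symdiff B C)"
    using assms by (intro finite_measure_mono) (auto simp: symdiff_def)
  also have "\<dots> \<le> measure M (symdiff A B) + measure M (symdiff B C)"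
    using assms by (intro measure_Un_le) (auto simp: symdiff_def)
  finally show ?thesis .
qed

lemma (in finite_measure) measure_symdiff_le_add:
  assumes "A \<in> sets M" "B \<in> sets M"
  shows "measure M (symdiff A B) \<le> measure M A + measure M B"
proof -
  have "measure M (symdiff A B) \<le> measure M (A \<union> B)"
    using assms by (intro finite_measure_mono) (auto simp: symdiff_def)
  also have "\<dots> \<le> measure M A + measure M B"
    using assms by (intro measure_Un_le)
  finally show ?thesis .
qed

lemma (in finite_measure) measure_symdiff_of_subset:
  assumes "A \<in> sets M" "B \<in> sets M" "A \<subseteq> B"
  shows "measure M (symdiff A B) = measure M B - measure M A"
proof -
  have "symdiff A B = B - A"
    using assms by (auto simp: symdiff_def)
  then show ?thesis
    using assms by (simp add: finite_measure_Diff)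
qed

lemma (in finite_measure) measure_le_add_measure_Diff:
  assumes "A \<in> sets M" "B \<in> sets M"
  shows "measure M A \<le> measure M B + measure M (A - B)"
proof -
  have "measure M A \<le> measure M (B \<union> (A - B))"
    using assms by (intro finite_measure_mono) auto
  also have "\<dots> \<le> measure M B + measure M (A - B)"
    using assms by (intro measure_Un_le) auto
  finally show ?thesis .
qed

lemma (in finite_measure) measure_Diff_le_symdiff:
  assumes "A \<in> sets M" "B \<in> sets M"
  shows "measure M (A - B) \<le> measure M (symdiff A B)"
  using assms by (intro finite_measure_mono) (auto simp: symdiff_def)

lemma (in finite_measure) abs_measure_diff_le_symdiff:
  assumes "A \<in> sets M" "B \<in> sets M"
  shows "\<bar>measure M A - measure M B\<bar> \<le> measure M (symdiff A B)"
  using measure_le_add_measure_Diff[OF assms] measure_le_add_measure_Diff[OF assms(2,1)]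
    measure_Diff_le_symdiff[OF assms] measure_Diff_le_symdiff[OF assms(2,1)]
  by (simp add: symdiff_commute[of B A])

section \<open>The Gaussian measure as a product of standard normals\<close>

abbreviation std_normal :: "real measure" where
  "std_normal \<equiv> density lborel std_normal_density"

lemma prob_space_std_normal: "prob_space std_normal"
  by (rule prob_space_normal_density) simp

lemma emeasure_std_normal_UNIV: "emeasure std_normal UNIV = 1"
  using prob_space.emeasure_space_1[OF prob_space_std_normal] by simp

lemma null_sets_std_normal_iff: "N \<in> null_sets std_normal \<longleftrightarrow> N \<in> null_sets lborel"
proof -
  have "N \<in> null_sets std_normal \<longleftrightarrow> N \<in> sets lborel \<and> (AE x in lborel. x \<notin> N)"
    using normal_density_pos[of 1 0] by (subst null_sets_density_iff) (auto simp: less_le)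
  also have "\<dots> \<longleftrightarrow> N \<in> null_sets lborel"
    using AE_iff_null_sets by blast
  finally show ?thesis .
qed

lemma real_distribution_std_normal: "real_distribution std_normal"
  using prob_space_std_normal by (simp add: real_distribution_def real_distribution_axioms_def)

lemma power2_norm_eq_sum_Basis:
  fixes x :: "'a::euclidean_space"
  shows "(norm x)\<^sup>2 = (\<Sum>b\<in>Basis. (x \<bullet> b)\<^sup>2)"
  by (subst power2_norm_eq_inner, subst euclidean_inner) (simp add: power2_eq_square)

lemma gauss_density_eq_prod:
  fixes x :: "'a::euclidean_space"
  shows "(2 * pi) powr (- real DIM('a) / 2) * exp (- (norm x)\<^sup>2 / 2)
       = (\<Prod>b\<in>Basis. std_normal_density (x \<bullet> b))"
proof -
  have exp_eq: "exp (- (norm x)\<^sup>2 / 2) = (\<Prod>b\<in>Basis. exp (- (x \<bullet> b)\<^sup>2 / 2))"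
    by (simp add: power2_norm_eq_sum_Basis exp_sum[symmetric] sum_negf sum_divide_distrib)
  have "(2 * pi) powr (- real DIM('a) / 2) = ((2 * pi) powr (- (1/2))) powr real DIM('a)"
    by (simp add: powr_powr)
  also have "\<dots> = (\<Prod>b\<in>(Basis::'a set). 1 / sqrt (2 * pi))"
    by (simp add: powr_realpow powr_minus_divide powr_half_sqrt)
  finally have const_eq:
      "(2 * pi) powr (- real DIM('a) / 2) = (\<Prod>b\<in>(Basis::'a set). 1 / sqrt (2 * pi))" .
  show ?thesis
    by (simp only: std_normal_density_def prod.distrib exp_eq const_eq)
qed

lemma sets_gauss [simp, measurable_cong]:
  "sets (gauss :: 'a::euclidean_space measure) = sets lebesgue"
  by (simp add: gauss_def)

lemma space_gauss [simp]: "space (gauss :: 'a::euclidean_space measure) = UNIV"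
  by (simp add: gauss_def)

lemma measurable_gauss_borel:
  assumes "f \<in> borel_measurable borel"
  shows "f \<in> measurable (gauss :: 'a::euclidean_space measure) borel"
proof -
  have "measurable (gauss :: 'a measure) borel = measurable lebesgue borel"
    by (rule measurable_cong_sets) simp_all
  then show ?thesis
    using measurable_completion[of f lborel borel] assms by simp
qed

lemma emeasure_gauss_box:
  fixes A :: "'a::euclidean_space \<Rightarrow> real set"
  assumes A: "\<And>b. b \<in> Basis \<Longrightarrow> A b \<in> sets borel"
  shows "emeasure (gauss :: 'a measure) {x. \<forall>b\<in>Basis. x \<bullet> b \<in> A b}
       = (\<Prod>b\<in>Basis. emeasure std_normal (A b))"
proof -
  let ?box = "{x::'a. \<forall>b\<in>Basis. x \<bullet> b \<in> A b}"
  have "?box = (\<Inter>b\<in>Basis. (\<lambda>x. x \<bullet> b) -` A b)" by auto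
  also have "\<dots> \<in> sets borel"
    using A by (intro sets.finite_INT) (auto intro!: measurable_sets_borel[of _ borel])
  finally have box: "?box \<in> sets borel" .
  have indicator_box:
      "indicator ?box x = (\<Prod>b\<in>Basis. indicator (A b) (x \<bullet> b) :: ennreal)" for x
    unfolding indicator_def by (simp add: prod.neutral)
  have "emeasure (gauss :: 'a measure) ?box
      = (\<integral>\<^sup>+x. ennreal ((2 * pi) powr (- real DIM('a) / 2) * exp (- (norm x)\<^sup>2 / 2))
                * indicator ?box x \<partial>lborel)"
    unfolding gauss_def using box
    by (subst emeasure_density) (auto simp: nn_integral_completion measurable_completion)
  also have "\<dots> = (\<integral>\<^sup>+x. (\<Prod>b\<in>Basis.
                ennreal (std_normal_density (x \<bullet> b) * indicator (A b) (x \<bullet> b))) \<partial>lborel)"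
    unfolding gauss_density_eq_prod indicator_box
    by (simp add: ennreal_mult' prod.distrib prod_ennreal ennreal_indicator)
  also have "\<dots> = (\<Prod>b\<in>Basis.
                (\<integral>\<^sup>+t. ennreal (std_normal_density t * indicator (A b) t) \<partial>lborel))"
    using A by (intro nn_integral_lborel_prod) auto
  also have "\<dots> = (\<Prod>b\<in>Basis. emeasure std_normal (A b))"
    using A by (intro prod.cong refl) (simp add: emeasure_density ennreal_mult'' ennreal_indicator)
  finally show ?thesis .
qed

lemma prob_space_gauss: "prob_space (gauss :: 'a::euclidean_space measure)"
proof
  have "emeasure (gauss :: 'a measure) {x. \<forall>b\<in>Basis. x \<bullet> b \<in> UNIV} = 1"
    by (subst emeasure_gauss_box) (simp_all add: emeasure_std_normal_UNIV)
  then show "emeasure (gauss :: 'a measure) (space gauss) = 1" by simp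
qed

lemma distr_gauss_inner_Basis:
  assumes b: "b \<in> (Basis :: 'a::euclidean_space set)"
  shows "distr (gauss :: 'a measure) borel (\<lambda>x. x \<bullet> b) = std_normal"
proof (rule measure_eqI)
  fix A assume "A \<in> sets (distr (gauss :: 'a measure) borel (\<lambda>x. x \<bullet> b))"
  then have A: "A \<in> sets borel" by simp
  have "emeasure (distr (gauss :: 'a measure) borel (\<lambda>x. x \<bullet> b)) A
      = emeasure (gauss :: 'a measure) {x. \<forall>c\<in>Basis. x \<bullet> c \<in> (if c = b then A else UNIV)}"
    using A b
    by (subst emeasure_distr) (auto intro!: measurable_gauss_borel arg_cong2[where f=emeasure])
  also have "\<dots> = emeasure std_normal A"
    using A b by (subst emeasure_gauss_box)
      (simp_all add: if_distrib[of "emeasure std_normal"] emeasure_std_normal_UNIV cong: if_cong)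
  finally show "emeasure (distr (gauss :: 'a measure) borel (\<lambda>x. x \<bullet> b)) A
      = emeasure std_normal A" .
qed simp

lemma distributed_gauss_inner_Basis:
  assumes "b \<in> (Basis :: 'a::euclidean_space set)"
  shows "distributed (gauss :: 'a measure) lborel (\<lambda>x. x \<bullet> b) (\<lambda>t. ennreal (std_normal_density t))"
proof -
  have "distr (gauss :: 'a measure) lborel (\<lambda>x. x \<bullet> b) = distr gauss borel (\<lambda>x. x \<bullet> b)"
    by (rule distr_cong) simp_all
  then show ?thesis
    using assms distr_gauss_inner_Basis[OF assms]
    by (auto simp: distributed_def intro!: measurable_gauss_borel)
qed

lemma indep_vars_gauss_inner_Basis:
  "prob_space.indep_vars (gauss :: 'a::euclidean_space measure) (\<lambda>_. borel) (\<lambda>b x. x \<bullet> b) Basis"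
proof -
  interpret prob_space "gauss :: 'a measure" by (rule prob_space_gauss)
  interpret std_normals: product_sigma_finite "\<lambda>_::'a. std_normal"
    unfolding product_sigma_finite_def
    using prob_space_imp_sigma_finite[OF prob_space_std_normal] by blast
  have rv: "random_variable borel (\<lambda>x. x \<bullet> b)" for b :: 'a
    by (intro measurable_gauss_borel) simp
  have "distr gauss (\<Pi>\<^sub>M b\<in>Basis. borel) (\<lambda>x. \<lambda>b\<in>Basis. x \<bullet> b)
      = (\<Pi>\<^sub>M b\<in>(Basis::'a set). std_normal)"
  proof (rule std_normals.PiM_eqI[OF finite_Basis])
    fix A :: "'a \<Rightarrow> real set" assume A: "\<And>b. b \<in> Basis \<Longrightarrow> A b \<in> sets std_normal"
    have "(\<lambda>x. \<lambda>b\<in>Basis. x \<bullet> b) \<in> measurable (gauss :: 'a measure) (\<Pi>\<^sub>M b\<in>Basis. borel)"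
      using rv by (intro measurable_restrict) auto
    moreover have "(\<lambda>x. \<lambda>b\<in>Basis. x \<bullet> b) -` Pi\<^sub>E Basis A \<inter> space gauss
        = {x. \<forall>b\<in>Basis. x \<bullet> b \<in> A b}"
      by (auto simp: PiE_iff)
    moreover have "Pi\<^sub>E Basis A \<in> sets (\<Pi>\<^sub>M b\<in>Basis. borel)"
      using A by (intro sets_PiM_I_finite) auto
    ultimately show "emeasure (distr gauss (\<Pi>\<^sub>M b\<in>Basis. borel) (\<lambda>x. \<lambda>b\<in>Basis. x \<bullet> b))
        (Pi\<^sub>E Basis A) = (\<Prod>b\<in>Basis. emeasure std_normal (A b))"
      using A by (simp add: emeasure_distr emeasure_gauss_box)
  qed (unfold sets_distr, rule sets_PiM_cong, simp_all)
  then show ?thesis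
    using rv by (subst indep_vars_iff_distr_eq_PiM)
      (auto intro!: PiM_cong simp: distr_gauss_inner_Basis)
qed

lemma Phi_eq_std_normal: "Phi r = measure std_normal {..<r}"
proof -
  have "emeasure (gauss :: real measure) {..<r} = emeasure std_normal {..<r}"
    using emeasure_gauss_box[where 'a=real, of "\<lambda>_. {..<r}"] by (simp add: lessThan_def)
  then show ?thesis by (simp add: Phi_def measure_def)
qed

lemma Phi_eq_cdf: "Phi = cdf std_normal"
proof
  fix r
  interpret real_distribution std_normal by (rule real_distribution_std_normal)
  have "{r} \<in> null_sets std_normal"
    by (auto simp: null_sets_std_normal_iff)
  then have "measure std_normal ({..<r} \<union> {r}) = measure std_normal {..<r}"
    by (subst finite_measure_Union) (auto simp: measure_eq_0_null_sets)
  moreover have "{..<r} \<union> {r} = {..r}" by auto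
  ultimately show "Phi r = cdf std_normal r"
    by (simp add: Phi_eq_std_normal cdf_def)
qed

lemma strict_mono_Phi: "strict_mono Phi"
proof
  fix r s :: real assume "r < s"
  interpret real_distribution std_normal by (rule real_distribution_std_normal)
  have "{r<..s} \<notin> null_sets lborel"
    using \<open>r < s\<close> by (auto simp: null_sets_def)
  then have "{r<..s} \<notin> null_sets std_normal"
    by (simp add: null_sets_std_normal_iff)
  then have "emeasure std_normal {r<..s} \<noteq> 0"
    by auto
  then have "measure std_normal {r<..s} \<noteq> 0"
    by (simp add: emeasure_eq_measure)
  then show "Phi r < Phi s"
    unfolding Phi_eq_cdf using cdf_diff_eq[OF \<open>r < s\<close>] measure_nonneg[of std_normal "{r<..s}"]
    by linarith
qed

lemma isCont_Phi: "isCont Phi r"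
proof -
  interpret real_distribution std_normal by (rule real_distribution_std_normal)
  have "{r} \<in> null_sets std_normal"
    by (auto simp: null_sets_std_normal_iff)
  then show ?thesis
    by (simp add: Phi_eq_cdf isCont_cdf measure_eq_0_null_sets)
qed

lemma Phi_Phi_inv:
  assumes "0 < p" "p < 1"
  shows "Phi (Phi_inv p) = p"
proof -
  interpret real_distribution std_normal by (rule real_distribution_std_normal)
  obtain r1 where r1: "Phi r1 < p"
    using order_tendstoD(2)[OF cdf_lim_at_bot assms(1)]
    by (auto simp: Phi_eq_cdf eventually_at_bot_linorder)
  obtain r2 where r2: "p < Phi r2"
    using order_tendstoD(1)[OF cdf_lim_at_top_prob assms(2)]
    by (auto simp: Phi_eq_cdf eventually_at_top_linorder)
  have "r1 \<le> r2"
  proof (rule ccontr)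
    assume "\<not> r1 \<le> r2"
    then have "Phi r2 < Phi r1" by (intro strict_monoD[OF strict_mono_Phi]) simp
    then show False using r1 r2 by simp
  qed
  moreover have "continuous_on {r1..r2} Phi"
    using isCont_Phi by (intro continuous_at_imp_continuous_on) simp
  ultimately obtain r where r: "Phi r = p"
    using IVT'[of Phi r1 p r2] r1 r2 by auto
  moreover have "Phi_inv p = r"
    unfolding Phi_inv_def by (rule the_equality) (use r strict_mono_eq[OF strict_mono_Phi] in auto)
  ultimately show ?thesis by simp
qed

section \<open>Gaussian measure of half-spaces\<close>

lemma halfsp_mono: "r \<le> s \<Longrightarrow> halfsp \<omega> r \<subseteq> halfsp \<omega> s"
  by (auto simp: halfsp_def)

lemma halfsp_in_sets_lebesgue [simp]: "halfsp \<omega> r \<in> sets lebesgue"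
proof -
  have "halfsp \<omega> r \<in> sets borel"
    unfolding halfsp_def by measurable
  then show ?thesis by simp
qed

lemma measure_gauss_halfsp:
  fixes \<omega> :: "'a::euclidean_space"
  assumes "norm \<omega> = 1"
  shows "measure gauss (halfsp \<omega> r) = Phi r"
proof -
  interpret prob_space "gauss :: 'a measure" by (rule prob_space_gauss)
  \<comment> \<open>\<open>normal_density_affine\<close> needs a nonzero scale, so drop the coordinates orthogonal to \<open>\<omega>\<close>\<close>
  define I where "I = {b\<in>Basis. \<omega> \<bullet> b \<noteq> 0}"
  have "\<omega> \<noteq> 0" using assms by auto
  then have I: "finite I" "I \<noteq> {}"
    using euclidean_all_zero_iff[of \<omega>] by (auto simp: I_def)
  have indep: "indep_vars (\<lambda>_. borel) (\<lambda>b x. (\<omega> \<bullet> b) * (x \<bullet> b)) I"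
    by (rule indep_vars_compose2[OF indep_vars_subset[OF indep_vars_gauss_inner_Basis]])
      (auto simp: I_def)
  have normal: "distributed gauss lborel (\<lambda>x. (\<omega> \<bullet> b) * (x \<bullet> b)) (normal_density 0 \<bar>\<omega> \<bullet> b\<bar>)"
    if "b \<in> I" for b
    using normal_density_affine[OF distributed_gauss_inner_Basis, where \<alpha>="\<omega> \<bullet> b" and \<beta>=0] that
    by (simp add: I_def)
  have "(\<Sum>b\<in>I. \<bar>\<omega> \<bullet> b\<bar>\<^sup>2) = (norm \<omega>)\<^sup>2"
    unfolding power2_norm_eq_sum_Basis power2_abs
    by (rule sum.mono_neutral_left) (auto simp: I_def)
  then have "distributed gauss lborel (\<lambda>x. \<Sum>b\<in>I. (\<omega> \<bullet> b) * (x \<bullet> b)) std_normal_density"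
    using sum_indep_normal[OF I indep _ normal] assms by (simp add: I_def)
  moreover have "(\<Sum>b\<in>I. (\<omega> \<bullet> b) * (x \<bullet> b)) = x \<bullet> \<omega>" for x
    unfolding inner_commute[of x \<omega>] euclidean_inner[of \<omega> x]
    by (rule sum.mono_neutral_left) (auto simp: I_def)
  ultimately have "distributed gauss lborel (\<lambda>x. x \<bullet> \<omega>) std_normal_density"
    by simp
  then have "emeasure gauss ((\<lambda>x. x \<bullet> \<omega>) -` {..<r} \<inter> space gauss) = emeasure std_normal {..<r}"
    by (subst emeasure_distr[where N=lborel, symmetric]) (auto simp: distributed_def)
  then show ?thesis
    by (simp add: halfsp_def vimage_def Phi_eq_std_normal measure_def lessThan_def)
qed

lemma measure_gauss_halfsp_Phi_inv:
  assumes "\<omega> \<in> sphere 0 1" "0 < p" "p < 1"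
  shows "measure gauss (halfsp \<omega> (Phi_inv p)) = p"
  using assms by (simp add: measure_gauss_halfsp Phi_Phi_inv)

lemma measure_symdiff_halfsp_Phi_inv:
  assumes \<omega>: "\<omega> \<in> sphere 0 1" and p: "0 < p" "p < 1" and q: "0 < q" "q < 1"
  shows "measure gauss (symdiff (halfsp \<omega> (Phi_inv p)) (halfsp \<omega> (Phi_inv q))) = \<bar>p - q\<bar>"
proof -
  interpret prob_space gauss by (rule prob_space_gauss)
  show ?thesis
  proof (cases "Phi_inv p \<le> Phi_inv q")
    case True
    then have "p \<le> q"
      using strict_mono_Phi Phi_Phi_inv p q by (metis strict_mono_less_eq)
    then show ?thesis
      using measure_symdiff_of_subset[OF _ _ halfsp_mono[OF True, of \<omega>]]
      by (simp add: measure_gauss_halfsp_Phi_inv[OF \<omega> p] measure_gauss_halfsp_Phi_inv[OF \<omega> q])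
  next
    case False
    then have "q \<le> p"
      using strict_mono_Phi Phi_Phi_inv p q by (metis nle_le strict_mono_less_eq)
    then show ?thesis
      using measure_symdiff_of_subset[OF _ _ halfsp_mono[of "Phi_inv q" "Phi_inv p" \<omega>]] False
      by (simp add: measure_gauss_halfsp_Phi_inv[OF \<omega> p] measure_gauss_halfsp_Phi_inv[OF \<omega> q]
          symdiff_commute)
  qed
qed

section \<open>Gaussian Fraenkel asymmetry\<close>

lemma gasym_le:
  assumes "\<omega> \<in> sphere 0 1"
  shows "gasym G \<le> measure gauss (symdiff G (halfsp \<omega> (Phi_inv (measure gauss G)))) / measure gauss G"
  unfolding gasym_def by (rule cINF_lower[OF bdd_belowI[of _ 0] assms]) auto

lemma gasym_greatest:
  fixes G :: "'a::euclidean_space set"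
  assumes "\<And>\<omega>. \<omega> \<in> sphere 0 1 \<Longrightarrow>
    c \<le> measure gauss (symdiff G (halfsp \<omega> (Phi_inv (measure gauss G)))) / measure gauss G"
  shows "c \<le> gasym G"
  unfolding gasym_def using assms by (intro cINF_greatest) auto

lemma gasym_nonneg: "0 \<le> gasym (G :: 'a::euclidean_space set)"
  by (rule gasym_greatest) simp

lemma gasym_le_2:
  fixes G :: "'a::euclidean_space set"
  assumes G: "G \<in> sets lebesgue" "0 < measure gauss G" "measure gauss G < 1"
  shows "gasym G \<le> 2"
proof -
  interpret prob_space "gauss :: 'a measure" by (rule prob_space_gauss)
  have "sphere (0::'a) 1 \<noteq> {}" by simp
  then obtain \<omega> :: 'a where \<omega>: "\<omega> \<in> sphere 0 1" by blast
  let ?H = "halfsp \<omega> (Phi_inv (measure gauss G))"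
  have "measure gauss (symdiff G ?H) \<le> 2 * measure gauss G"
    using measure_symdiff_le_add[of G ?H] measure_gauss_halfsp_Phi_inv[OF \<omega> G(2,3)] G(1) by simp
  then have "measure gauss (symdiff G ?H) / measure gauss G \<le> 2"
    using G(2) by (simp add: divide_le_eq)
  then show ?thesis
    using gasym_le[OF \<omega>, of G] by linarith
qed

lemma measure_mult_gasym_le_add_symdiff:
  fixes E F :: "'a::euclidean_space set"
  assumes E: "E \<in> sets lebesgue" "0 < measure gauss E" "measure gauss E < 1"
    and F: "F \<in> sets lebesgue" "0 < measure gauss F" "measure gauss F < 1"
  shows "measure gauss F * gasym F \<le> measure gauss E * gasym E + 2 * measure gauss (symdiff F E)"
proof -
  interpret prob_space "gauss :: 'a measure" by (rule prob_space_gauss)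
  define a b d where "a = measure gauss E" and "b = measure gauss F"
    and "d = measure gauss (symdiff F E)"
  have "(b * gasym F - 2 * d) / a \<le> gasym E"
  proof (rule gasym_greatest, fold a_def)
    fix \<omega> :: 'a assume \<omega>: "\<omega> \<in> sphere 0 1"
    define HE HF where "HE = halfsp \<omega> (Phi_inv a)" and "HF = halfsp \<omega> (Phi_inv b)"
    have "b * gasym F \<le> measure gauss (symdiff F HF)"
      using gasym_le[OF \<omega>, of F] F(2) by (simp add: HF_def b_def le_divide_eq mult.commute)
    also have "\<dots> \<le> d + measure gauss (symdiff E HE) + measure gauss (symdiff HE HF)"
      using measure_symdiff_triangle[of F E HF] measure_symdiff_triangle[of E HE HF] E F
      by (simp add: d_def HE_def HF_def)
    also have "measure gauss (symdiff HE HF) = \<bar>a - b\<bar>"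
      using measure_symdiff_halfsp_Phi_inv[OF \<omega>] E F by (simp add: HE_def HF_def a_def b_def)
    also have "\<bar>a - b\<bar> \<le> d"
      using abs_measure_diff_le_symdiff[of F E] E F by (simp add: a_def b_def d_def abs_minus_commute)
    finally show "(b * gasym F - 2 * d) / a \<le> measure gauss (symdiff E (halfsp \<omega> (Phi_inv a))) / a"
      using E(2) by (intro divide_right_mono) (simp_all add: a_def HE_def)
  qed
  then show ?thesis
    using E(2) by (simp add: a_def b_def d_def pos_divide_le_eq mult.commute)
qed

lemma measure_gauss_le_ckappa_mult:
  fixes E F :: "'a::euclidean_space set"
  assumes "E \<in> sets lebesgue" "F \<in> sets lebesgue"
    and "0 < measure gauss F" "measure gauss F < 1" "0 \<le> \<kappa>"
    and "measure gauss (symdiff F E) \<le> \<kappa> * measure gauss F * gasym F"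
  shows "measure gauss E \<le> (if measure gauss (E - F) = 0 then 1 else 1 + 2 * \<kappa>) * measure gauss F"
proof -
  interpret prob_space "gauss :: 'a measure" by (rule prob_space_gauss)
  have "measure gauss E \<le> measure gauss F + measure gauss (E - F)"
    using measure_le_add_measure_Diff[of E F] assms(1,2) by simp
  moreover have "measure gauss (E - F) \<le> \<kappa> * measure gauss F * 2"
  proof -
    have "measure gauss (E - F) \<le> measure gauss (symdiff F E)"
      using measure_Diff_le_symdiff[of E F] assms(1,2) by (simp add: symdiff_commute)
    also have "\<dots> \<le> \<kappa> * measure gauss F * gasym F" by (rule assms(6))
    also have "\<dots> \<le> \<kappa> * measure gauss F * 2"
      using gasym_le_2[OF assms(2-4)] assms(3,5) by (intro mult_left_mono) simp_all
    finally show ?thesis .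
  qed
  ultimately show ?thesis
    by (auto simp: algebra_simps)
qed

theorem lemma4p2:
  fixes E F :: "(real ^ 'n) set" and \<kappa> :: real
  assumes "E \<in> sets lebesgue" and "F \<in> sets lebesgue"
    and "0 < measure gauss E" and "measure gauss E < 1"
    and "0 < measure gauss F" and "measure gauss F < 1"
    and "0 < \<kappa>" and "\<kappa> < 1/2"
    and "measure gauss (symdiff F E) / measure gauss F \<le> \<kappa> * gasym F"
  shows "gasym E \<ge> (1 - 2 * \<kappa>) / (if measure gauss (E - F) = 0 then 1 else 1 + 2 * \<kappa>) * gasym F"
proof -
  define c where "c = (if measure gauss (E - F) = 0 then 1 else 1 + 2 * \<kappa>)"
  have close: "measure gauss (symdiff F E) \<le> \<kappa> * measure gauss F * gasym F"
    using assms(5,9) by (simp add: divide_le_eq mult_ac)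
  have "(1 - 2 * \<kappa>) * gasym F * measure gauss F \<le> measure gauss E * gasym E"
    using measure_mult_gasym_le_add_symdiff[OF assms(1,3,4,2,5,6)] close
    by (simp add: algebra_simps)
  also have "\<dots> \<le> c * measure gauss F * gasym E"
    using measure_gauss_le_ckappa_mult[OF assms(1,2,5,6) _ close] assms(7) gasym_nonneg[of E]
    by (intro mult_right_mono) (simp_all add: c_def)
  finally have "(1 - 2 * \<kappa>) * gasym F \<le> c * gasym E"
    using assms(5) by (simp add: mult_ac)
  moreover have "0 < c"
    using assms(7) by (simp add: c_def)
  ultimately show ?thesis
    unfolding c_def[symmetric] by (simp add: pos_divide_le_eq mult.commute)
qed

end
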